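(* Let $f\in\mathbb{Q}[[y,z]]$ be the formal power series $$f=\frac{(1-y-z)-\sqrt{(1-y-z)^2-4yz}}{2},$$ which is the unique formal power series with zero constant term satisfying $f=(y+f)(z+f)$. Then for all integers $n\ge 1$, $0\le r\le n$ and $k\ge 0$, the number $N_k^{n,r}$ equals the coefficient of $y^r z^{n-r}$ in $(y+z+2f)^{k+1}$.
   Context: A lattice path from $(0,0)$ to $(r,n-r)$ (with integers $n\ge 1$, $0\le r\le n$) is a sequence of lattice points $v_0=(0,0),v_1,\dots,v_n=(r,n-r)$ with each step $v_i-v_{i-1}\in\{(1,0),(0,1)\}$ (an E step or an N step); its vertex set is $\{v_0,\dots,v_n\}$. For $k\ge 0$, $N_k^{n,r}$ denotes the number of ordered pairs $(P,Q)$ of lattice paths from $(0,0)$ to $(r,n-r)$ such that the intersection of their vertex sets, with the two points $(0,0)$ and $(r,n-r)$ removed, has exactly $k$ elements. The square root is the formal power series square root with constant term $1$. *)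

theory Defs
  imports "HOL-Computational_Algebra.Formal_Power_Series"
begin

definition lattice_path :: "nat \<Rightarrow> nat \<Rightarrow> (nat \<times> nat) list \<Rightarrow> bool" where
  "lattice_path n r P \<longleftrightarrow> length P = Suc n \<and> P ! 0 = (0, 0) \<and> P ! n = (r, n - r) \<and>
     (\<forall>i<n. P ! Suc i = (fst (P ! i) + 1, snd (P ! i)) \<or> P ! Suc i = (fst (P ! i), snd (P ! i) + 1))"

definition N_count :: "nat \<Rightarrow> nat \<Rightarrow> nat \<Rightarrow> nat" where
  "N_count k n r = card {(P, Q). lattice_path n r P \<and> lattice_path n r Q \<and>
      card ((set P \<inter> set Q) - {(0, 0), (r, n - r)}) = k}"

text \<open>Bivariate power series Q[[y,z]] represented as (Q[[y]])[[z]]: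
  the outer variable is z, the inner variable is y.\<close>
definition Yv :: "rat fps fps" where "Yv = fps_const fps_X"
definition Zv :: "rat fps fps" where "Zv = fps_X"

definition coeff2 :: "rat fps fps \<Rightarrow> nat \<Rightarrow> nat \<Rightarrow> rat" where
  "coeff2 F a b = fps_nth (fps_nth F b) a"

definition fsqrt2 :: "rat fps fps \<Rightarrow> rat fps fps" where
  "fsqrt2 G = (THE H. H * H = G \<and> coeff2 H 0 0 = 1)"

definition f_series :: "rat fps fps" where
  "f_series = fps_const (fps_const (1/2)) *
     ((1 - Yv - Zv) - fsqrt2 ((1 - Yv - Zv)^2 - 4 * Yv * Zv))"

end

(* Read a pair of lattice paths with n steps as a word of n letters in bool \<times> bool.  The paths
   meet after i steps iff the prefix of length i has height 0, the height counting the east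
   steps of the first path minus those of the second.  So N_k^{n,r} counts balanced words with
   exactly k interior returns to height 0, and these factor uniquely into k + 1 primitive words
   (no interior return): the generating function is P^(k+1), P that of primitive words.
   A primitive word is a level letter (y or z) or a positive or negative excursion, so
   P = y + z + 2E.  A positive excursion is an up step, a Motzkin word and a down step, and
   first-return decomposition of Motzkin words gives M = 1 + (y + z + E) M with E = y M z.
   Eliminating M yields E = (y + E)(z + E); completing the square, 1 - y - z - 2E is the square
   root of (1 - y - z)^2 - 4yz with constant term 1, so E = f. *)

theory Submission
  imports Defs
begin

lemma coeff2_eqI: "(\<And>a b. coeff2 F a b = coeff2 G a b) \<Longrightarrow> F = G"
  unfolding coeff2_def by (simp add: fps_eq_iff)

lemma coeff2_add [simp]: "coeff2 (F + G) a b = coeff2 F a b + coeff2 G a b"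
  by (simp add: coeff2_def)

lemma coeff2_diff [simp]: "coeff2 (F - G) a b = coeff2 F a b - coeff2 G a b"
  by (simp add: coeff2_def)

lemma coeff2_numeral_mult [simp]: "coeff2 (numeral k * F) a b = numeral k * coeff2 F a b"
  by (simp add: coeff2_def numeral_fps_const)

lemma coeff2_mult:
  "coeff2 (F * G) a b = (\<Sum>i\<le>a. \<Sum>j\<le>b. coeff2 F i j * coeff2 G (a - i) (b - j))"
proof -
  have "coeff2 (F * G) a b = (\<Sum>j\<le>b. \<Sum>i\<le>a. coeff2 F i j * coeff2 G (a - i) (b - j))"
    by (simp add: coeff2_def fps_mult_nth fps_sum_nth atLeast0AtMost)
  then show ?thesis by (simp add: sum.swap[of _ "{..a}"])
qed

lemma coeff2_one [simp]: "coeff2 1 a b = (if a = 0 \<and> b = 0 then 1 else 0)"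
  by (simp add: coeff2_def)

lemma coeff2_Yv [simp]: "coeff2 Yv a b = (if a = 1 \<and> b = 0 then 1 else 0)"
  by (simp add: coeff2_def Yv_def)

lemma coeff2_Zv [simp]: "coeff2 Zv a b = (if a = 0 \<and> b = 1 then 1 else 0)"
  by (simp add: coeff2_def Zv_def)

section \<open>Words over pairs of steps\<close>

definition east :: "bool list \<Rightarrow> nat" where
  "east p = length (filter id p)"

lemma east_simps [simp]:
  "east [] = 0" "east (x # xs) = of_bool x + east xs" "east (xs @ ys) = east xs + east ys"
  by (simp_all add: east_def)

lemma east_le_length: "east p \<le> length p"
  by (simp add: east_def)

lemma east_take_le: "east (take i p) \<le> i"
  using east_le_length[of "take i p"] by simp

lemma east_take_Suc:
  "i < length p \<Longrightarrow> east (take (Suc i) p) = east (take i p) + of_bool (p ! i)"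
  by (simp add: take_Suc_conv_app_nth)

(* A letter (s, t) records one step of each of two lattice paths, True meaning east.
   The bidegree counts the east and north steps of the first path; word_gf marks them by y and z. *)
definition bideg :: "(bool \<times> bool) list \<Rightarrow> nat \<times> nat" where
  "bideg w = (east (map fst w), length w - east (map fst w))"

lemma bideg_append:
  "bideg (u @ v) = (fst (bideg u) + fst (bideg v), snd (bideg u) + snd (bideg v))"
  using east_le_length[of "map fst u"] east_le_length[of "map fst v"] by (simp add: bideg_def)

lemma length_eq_bideg: "length w = fst (bideg w) + snd (bideg w)"
  using east_le_length[of "map fst w"] by (simp add: bideg_def)

lemma finite_bideg_fibre: "finite {w \<in> A. bideg w = p}"
proof (rule finite_subset)
  show "{w \<in> A. bideg w = p} \<subseteq> {w. set w \<subseteq> UNIV \<and> length w = fst p + snd p}"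
    using length_eq_bideg by auto
  show "finite {w :: (bool \<times> bool) list. set w \<subseteq> UNIV \<and> length w = fst p + snd p}"
    by (rule finite_lists_length_eq) simp
qed

(* The height of a prefix is the difference of the x-coordinates of the two paths after
   that many steps, so the paths meet exactly after the prefixes of height 0. *)
definition height :: "(bool \<times> bool) list \<Rightarrow> int" where
  "height w = int (east (map fst w)) - int (east (map snd w))"

lemma height_simps [simp]:
  "height [] = 0" "height (x # w) = of_bool (fst x) - of_bool (snd x) + height w"
  "height (u @ v) = height u + height v"
  by (simp_all add: height_def)

lemma height_take_Suc:
  "i < length w \<Longrightarrow> height (take (Suc i) w) = height (take i w) + height [w ! i]"
  by (simp add: take_Suc_conv_app_nth)

lemma height_letter_pos: "0 < height [x] \<longleftrightarrow> x = (True, False)"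
  by (cases x) auto

lemma height_letter_zero: "height [x] = 0 \<longleftrightarrow> x = (True, True) \<or> x = (False, False)"
  by (cases x) auto

lemma abs_height_letter: "\<bar>height [x]\<bar> \<le> 1"
  by (cases x) auto

lemma height_swap [simp]: "height (map prod.swap w) = - height w"
  by (simp add: height_def comp_def)

lemma height_take_swap [simp]: "height (take i (map prod.swap w)) = - height (take i w)"
  by (simp add: take_map)

lemma bideg_swap: "height w = 0 \<Longrightarrow> bideg (map prod.swap w) = bideg w"
  by (simp add: bideg_def height_def comp_def)

definition conc :: "'a list set \<Rightarrow> 'a list set \<Rightarrow> 'a list set" where
  "conc A B = (\<lambda>(u, v). u @ v) ` (A \<times> B)"

lemma append_in_conc: "u \<in> A \<Longrightarrow> v \<in> B \<Longrightarrow> u @ v \<in> conc A B"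
  unfolding conc_def by (rule image_eqI[of _ _ "(u, v)"]) auto

lemma concE:
  assumes "w \<in> conc A B"
  obtains u v where "w = u @ v" "u \<in> A" "v \<in> B"
  using assms by (auto simp: conc_def)

lemma conc_singleton_left: "conc {u} B = (\<lambda>v. u @ v) ` B"
  by (auto simp: conc_def)

lemma conc_singleton_right: "conc A {v} = (\<lambda>u. u @ v) ` A"
  by (auto simp: conc_def)

definition word_gf :: "(bool \<times> bool) list set \<Rightarrow> rat fps fps" where
  "word_gf A = Abs_fps (\<lambda>b. Abs_fps (\<lambda>a. of_nat (card {w \<in> A. bideg w = (a, b)})))"

lemma coeff2_word_gf: "coeff2 (word_gf A) a b = of_nat (card {w \<in> A. bideg w = (a, b)})"
  by (simp add: word_gf_def coeff2_def)

lemma coeff2_word_gf_singleton: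
  "coeff2 (word_gf {u}) a b = (if bideg u = (a, b) then 1 else 0)"
proof -
  have "{w \<in> {u}. bideg w = (a, b)} = (if bideg u = (a, b) then {u} else {})"
    by auto
  then show ?thesis by (simp add: coeff2_word_gf)
qed

lemma word_gf_Nil: "word_gf {[]} = 1"
  by (rule coeff2_eqI) (auto simp: coeff2_word_gf_singleton bideg_def)

lemma word_gf_letter: "word_gf {[x]} = (if fst x then Yv else Zv)"
  by (rule coeff2_eqI) (auto simp: coeff2_word_gf_singleton bideg_def)

lemma word_gf_Un:
  assumes "A \<inter> B = {}"
  shows "word_gf (A \<union> B) = word_gf A + word_gf B"
proof (rule coeff2_eqI)
  fix a b
  have "{w \<in> A \<union> B. bideg w = (a, b)} = {w \<in> A. bideg w = (a, b)} \<union> {w \<in> B. bideg w = (a, b)}"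
    by blast
  then show "coeff2 (word_gf (A \<union> B)) a b = coeff2 (word_gf A + word_gf B) a b"
    using assms by (simp add: coeff2_word_gf card_Un_disjoint finite_bideg_fibre disjoint_iff)
qed

lemma word_gf_swap:
  assumes "\<And>w. w \<in> A \<Longrightarrow> height w = 0"
  shows "word_gf (map prod.swap ` A) = word_gf A"
proof (rule coeff2_eqI)
  fix a b
  have "{w \<in> map prod.swap ` A. bideg w = (a, b)} = map prod.swap ` {w \<in> A. bideg w = (a, b)}"
    using assms bideg_swap by fastforce
  moreover have "inj_on (map prod.swap) C" for C :: "(bool \<times> bool) list set"
    by (rule inj_onI) (metis map_map swap_comp_swap list.map_id)
  ultimately show "coeff2 (word_gf (map prod.swap ` A)) a b = coeff2 (word_gf A) a b"
    by (simp add: coeff2_word_gf card_image)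
qed

lemma word_gf_conc:
  assumes inj: "inj_on (\<lambda>(u, v). u @ v) (A \<times> B)"
  shows "word_gf (conc A B) = word_gf A * word_gf B"
proof (rule coeff2_eqI)
  fix a b
  define fibre where "fibre C p = {w \<in> C. bideg w = p}" for C p
  define pieces where "pieces p = fibre A p \<times> fibre B (a - fst p, b - snd p)" for p
  have split: "{(u, v) \<in> A \<times> B. bideg (u @ v) = (a, b)} = (\<Union>p \<in> {..a} \<times> {..b}. pieces p)"
    by (auto simp: pieces_def fibre_def bideg_append mem_Times_iff)
  have "card {w \<in> conc A B. bideg w = (a, b)}
      = card ((\<lambda>(u, v). u @ v) ` {(u, v) \<in> A \<times> B. bideg (u @ v) = (a, b)})"
    unfolding conc_def by (rule arg_cong[where f = card]) auto
  also have "\<dots> = card {(u, v) \<in> A \<times> B. bideg (u @ v) = (a, b)}"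
    by (rule card_image, rule inj_on_subset[OF inj]) auto
  also have "\<dots> = card (\<Union>p \<in> {..a} \<times> {..b}. pieces p)"
    by (simp only: split)
  also have "\<dots> = (\<Sum>p \<in> {..a} \<times> {..b}. card (pieces p))"
    by (rule card_UN_disjoint) (auto simp: pieces_def fibre_def finite_bideg_fibre)
  also have "\<dots> = (\<Sum>i\<le>a. \<Sum>j\<le>b. card (fibre A (i, j)) * card (fibre B (a - i, b - j)))"
    by (simp add: pieces_def sum.cartesian_product card_cartesian_product split_beta)
  finally show "coeff2 (word_gf (conc A B)) a b = coeff2 (word_gf A * word_gf B) a b"
    by (simp add: coeff2_word_gf coeff2_mult fibre_def)
qed

section \<open>Factorisation into primitive words\<close>

definition returns :: "(bool \<times> bool) list \<Rightarrow> nat set" where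
  "returns w = {i. 0 < i \<and> i < length w \<and> height (take i w) = 0}"

definition primitive :: "(bool \<times> bool) list \<Rightarrow> bool" where
  "primitive w \<longleftrightarrow> w \<noteq> [] \<and> height w = 0 \<and> returns w = {}"

lemma finite_returns [simp]: "finite (returns w)"
  by (simp add: returns_def)

lemma primitive_swap [simp]: "primitive (map prod.swap w) \<longleftrightarrow> primitive w"
  by (simp add: primitive_def returns_def)

lemma primitive_letter: "primitive [x] \<longleftrightarrow> height [x] = 0"
proof -
  have "returns [x] = {}"
    by (auto simp: returns_def)
  then show ?thesis
    by (simp add: primitive_def)
qed

lemma primitive_append_cancel:
  assumes "primitive u" "primitive u'" "u @ v = u' @ v'"
  shows "u = u'"
proof -
  have "\<not> length u < length u'" if "primitive u" "primitive u'" "u @ v = u' @ v'" for u u' v v'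
  proof
    assume less: "length u < length u'"
    then have "take (length u) u' = u"
      using that(3) by (metis append_eq_append_conv_if append_eq_conv_conj less_imp_le_nat take_all_iff)
    then have "length u \<in> returns u'"
      using that(1) less by (auto simp: returns_def primitive_def)
    then show False
      using that(2) by (simp add: primitive_def)
  qed
  from this[OF assms] this[OF assms(2,1) assms(3)[symmetric]] have "length u = length u'"
    by linarith
  then show ?thesis
    using assms(3) by (simp add: append_eq_append_conv)
qed

lemma inj_on_append_primitive:
  "A \<subseteq> Collect primitive \<Longrightarrow> inj_on (\<lambda>(u, v). u @ v) (A \<times> B)"
  by (auto simp: inj_on_def dest: primitive_append_cancel)

lemma inj_on_append_singleton_left: "inj_on (\<lambda>(u, v). u @ v) ({u} \<times> B)"
  by (auto simp: inj_on_def)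

lemma inj_on_append_singleton_right: "inj_on (\<lambda>(u, v). u @ v) (A \<times> {v})"
  by (auto simp: inj_on_def)

lemma returns_append_primitive:
  assumes "primitive u" "v \<noteq> []"
  shows "returns (u @ v) = insert (length u) ((+) (length u) ` returns v)"
proof (rule set_eqI)
  fix i
  show "i \<in> returns (u @ v) \<longleftrightarrow> i \<in> insert (length u) ((+) (length u) ` returns v)"
  proof (cases "i < length u")
    case True
    then show ?thesis
      using assms by (auto simp: returns_def primitive_def)
  next
    case False
    then obtain j where "i = length u + j"
      using le_Suc_ex not_less by blast
    then show ?thesis
      using assms by (auto simp: returns_def primitive_def)
  qed
qed

lemma card_returns_append_primitive:
  assumes "primitive u" "v \<noteq> []"
  shows "card (returns (u @ v)) = Suc (card (returns v))"
proof -
  have "length u \<notin> (+) (length u) ` returns v"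
    by (auto simp: returns_def)
  moreover have "card ((+) (length u) ` returns v) = card (returns v)"
    by (simp add: card_image)
  ultimately show ?thesis
    by (simp add: returns_append_primitive[OF assms])
qed

lemma primitive_prefixE:
  assumes "height w = 0" "returns w \<noteq> {}"
  obtains u v where "w = u @ v" "primitive u" "v \<noteq> []"
proof
  define m where "m = Min (returns w)"
  have m: "m \<in> returns w"
    using assms(2) by (simp add: m_def)
  show "w = take m w @ drop m w" "drop m w \<noteq> []"
    using m by (auto simp: returns_def)
  have "i \<notin> returns (take m w)" for i
  proof
    assume "i \<in> returns (take m w)"
    then have "i \<in> returns w" "i < m"
      using m by (auto simp: returns_def)
    then show False
      unfolding m_def by (metis Min_le finite_returns leD)
  qed
  then show "primitive (take m w)"
    using m by (auto simp: primitive_def returns_def)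
qed

definition words_with_returns :: "nat \<Rightarrow> (bool \<times> bool) list set" where
  "words_with_returns k = {w. w \<noteq> [] \<and> height w = 0 \<and> card (returns w) = k}"

lemma words_with_returns_0: "words_with_returns 0 = Collect primitive"
  by (auto simp: words_with_returns_def primitive_def)

lemma words_with_returns_Suc:
  "words_with_returns (Suc k) = conc (Collect primitive) (words_with_returns k)"
proof (rule set_eqI)
  fix w
  show "w \<in> words_with_returns (Suc k) \<longleftrightarrow> w \<in> conc (Collect primitive) (words_with_returns k)"
  proof
    assume w: "w \<in> words_with_returns (Suc k)"
    then have "height w = 0" "returns w \<noteq> {}"
      by (auto simp: words_with_returns_def)
    then obtain u v where uv: "w = u @ v" "primitive u" "v \<noteq> []"
      by (rule primitive_prefixE)
    then have "v \<in> words_with_returns k"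
      using w by (auto simp: words_with_returns_def primitive_def card_returns_append_primitive)
    then show "w \<in> conc (Collect primitive) (words_with_returns k)"
      using uv by (auto simp: conc_def)
  next
    assume "w \<in> conc (Collect primitive) (words_with_returns k)"
    then show "w \<in> words_with_returns (Suc k)"
      by (auto simp: conc_def words_with_returns_def primitive_def card_returns_append_primitive)
  qed
qed

lemma word_gf_words_with_returns:
  "word_gf (words_with_returns k) = word_gf (Collect primitive) ^ Suc k"
proof (induction k)
  case 0
  then show ?case
    by (simp add: words_with_returns_0)
next
  case (Suc k)
  then show ?case
    by (simp add: words_with_returns_Suc word_gf_conc[OF inj_on_append_primitive])
qed

section \<open>Excursions and Motzkin words\<close>

definition level_words :: "(bool \<times> bool) list set" where
  "level_words = {[(True, True)], [(False, False)]}"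

definition excursions :: "(bool \<times> bool) list set" where
  "excursions = {w. primitive w \<and> 0 < height (take 1 w)}"

(* Bicoloured Motzkin paths: (True, False) is an up step, (False, True) a down step and
   the other two letters are level steps. *)
definition motzkin_words :: "(bool \<times> bool) list set" where
  "motzkin_words = {w. height w = 0 \<and> (\<forall>i \<le> length w. 0 \<le> height (take i w))}"

(* Discrete intermediate value theorem: a letter changes the height by at most one. *)
lemma excursion_height_pos:
  assumes "w \<in> excursions" "0 < i" "i < length w"
  shows "0 < height (take i w)"
  using assms(2,3)
proof (induction i)
  case 0
  then show ?case by simp
next
  case (Suc i)
  show ?case
  proof (cases "i = 0")
    case True
    then show ?thesis
      using assms(1) by (simp add: excursions_def)
  next
    case False
    then have "0 < height (take i w)"
      using Suc by simp
    moreover have "height (take (Suc i) w) \<noteq> 0"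
      using assms(1) Suc.prems by (auto simp: excursions_def primitive_def returns_def)
    ultimately show ?thesis
      using height_take_Suc[of i w] abs_height_letter[of "w ! i"] Suc.prems by linarith
  qed
qed

lemma excursion_shape:
  assumes w: "w \<in> excursions"
  obtains v where "v \<in> motzkin_words" "w = (True, False) # v @ [(False, True)]"
proof -
  have prim: "primitive w" and first: "0 < height (take 1 w)"
    using w by (auto simp: excursions_def)
  then obtain x w' where w_Cons: "w = x # w'"
    by (cases w) (auto simp: primitive_def)
  have "w' \<noteq> []"
    using prim first w_Cons by (auto simp: primitive_def)
  then obtain v y where w_eq: "w = x # v @ [y]"
    using w_Cons by (metis rev_exhaust)
  have x: "x = (True, False)"
    using first w_eq height_letter_pos by simp
  have pos: "0 < height (take (Suc j) w)" if "j \<le> length v" for j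
    using excursion_height_pos[OF w, of "Suc j"] that w_eq by simp
  have "height w = 0"
    using prim by (simp add: primitive_def)
  then have y: "y = (False, True)"
    using pos[of "length v"] w_eq by (cases "fst y"; cases "snd y") (auto simp: prod_eq_iff)
  then have "height v = 0"
    using \<open>height w = 0\<close> w_eq x by simp
  moreover have "0 \<le> height (take j v)" if "j \<le> length v" for j
    using pos[OF that] that w_eq x by simp
  ultimately have "v \<in> motzkin_words"
    by (simp add: motzkin_words_def)
  then show thesis
    using that w_eq x y by blast
qed

lemma wrapped_motzkin_word_in_excursions:
  assumes v: "v \<in> motzkin_words"
  shows "(True, False) # v @ [(False, True)] \<in> excursions"
proof -
  define w where "w = (True, False) # v @ [(False, True)]"
  have "0 < height (take i w)" if i: "0 < i" "i < length w" for i
  proof -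
    obtain j where j: "i = Suc j" "j \<le> length v"
      using i by (cases i) (auto simp: w_def)
    then have "0 \<le> height (take j v)"
      using v by (simp add: motzkin_words_def)
    then show ?thesis
      using j by (simp add: w_def)
  qed
  then have "returns w = {}"
    by (auto simp: returns_def) (metis less_irrefl)
  moreover have "height w = 0"
    using v by (simp add: motzkin_words_def w_def)
  ultimately show ?thesis
    by (simp add: excursions_def primitive_def w_def)
qed

lemma excursions_eq_conc:
  "excursions = conc (conc {[(True, False)]} motzkin_words) {[(False, True)]}"
proof -
  have "excursions = (\<lambda>v. (True, False) # v @ [(False, True)]) ` motzkin_words"
    using wrapped_motzkin_word_in_excursions by (blast elim: excursion_shape)
  then show ?thesis
    by (simp add: conc_singleton_left conc_singleton_right image_image)
qed

lemma Collect_primitive_eq: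
  "Collect primitive = level_words \<union> excursions \<union> map prod.swap ` excursions"
proof (rule set_eqI)
  fix w
  show "w \<in> Collect primitive \<longleftrightarrow>
    w \<in> level_words \<union> excursions \<union> map prod.swap ` excursions"
  proof
    assume prim: "w \<in> Collect primitive"
    then obtain x w' where w: "w = x # w'"
      by (cases w) (auto simp: primitive_def)
    consider "height [x] = 0" | "0 < height [x]" | "height [x] < 0"
      by linarith
    then show "w \<in> level_words \<union> excursions \<union> map prod.swap ` excursions"
    proof cases
      case 1
      have "1 \<notin> returns w"
        using prim by (simp add: primitive_def)
      then have "w' = []"
        using 1 w by (cases w') (auto simp: returns_def)
      then show ?thesis
        using 1 w height_letter_zero by (auto simp: level_words_def)
    next
      case 2
      then show ?thesis
        using prim w by (simp add: excursions_def)
    next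
      case 3
      then have "height (take 1 w) < 0"
        using w by simp
      then have "map prod.swap w \<in> excursions"
        using prim by (simp add: excursions_def)
      then have "map prod.swap (map prod.swap w) \<in> map prod.swap ` excursions"
        by blast
      then show ?thesis
        by simp
    qed
  next
    assume "w \<in> level_words \<union> excursions \<union> map prod.swap ` excursions"
    then show "w \<in> Collect primitive"
      by (auto simp: level_words_def excursions_def primitive_letter)
  qed
qed

lemma Collect_primitive_Int_motzkin_words:
  "Collect primitive \<inter> motzkin_words = level_words \<union> excursions"
proof -
  have "map prod.swap w \<notin> motzkin_words" if "w \<in> excursions" for w
  proof -
    have "w \<noteq> []"
      using that by (auto simp: excursions_def primitive_def)
    then show ?thesis
      using that by (auto simp: excursions_def motzkin_words_def Suc_le_eq intro!: exI[of _ 1])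
  qed
  moreover have "w \<in> motzkin_words" if "w \<in> excursions" for w
  proof -
    have "0 \<le> height (take i w)" if "i \<le> length w" for i
      using excursion_height_pos[OF \<open>w \<in> excursions\<close>, of i] that \<open>w \<in> excursions\<close>
      by (cases "i = 0 \<or> i = length w") (auto simp: excursions_def primitive_def)
    then show ?thesis
      using that by (simp add: excursions_def primitive_def motzkin_words_def)
  qed
  moreover have "level_words \<subseteq> motzkin_words"
    by (auto simp: level_words_def motzkin_words_def le_Suc_eq)
  ultimately show ?thesis
    unfolding Collect_primitive_eq by blast
qed

lemma append_in_motzkin_words_iff:
  assumes "height u = 0"
  shows "u @ v \<in> motzkin_words \<longleftrightarrow> u \<in> motzkin_words \<and> v \<in> motzkin_words"
proof
  assume uv: "u @ v \<in> motzkin_words"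
  have "0 \<le> height (take i u)" if "i \<le> length u" for i
    using uv that by (auto simp: motzkin_words_def dest!: spec[of _ i])
  moreover have "0 \<le> height (take j v)" if "j \<le> length v" for j
    using uv that assms by (auto simp: motzkin_words_def dest!: spec[of _ "length u + j"])
  ultimately show "u \<in> motzkin_words \<and> v \<in> motzkin_words"
    using uv assms by (simp add: motzkin_words_def)
next
  assume "u \<in> motzkin_words \<and> v \<in> motzkin_words"
  then have u: "u \<in> motzkin_words" and v: "v \<in> motzkin_words"
    by simp_all
  have "0 \<le> height (take i (u @ v))" if "i \<le> length (u @ v)" for i
  proof (cases "i \<le> length u")
    case True
    then show ?thesis
      using u by (simp add: motzkin_words_def)
  next
    case False
    then have "take i (u @ v) = u @ take (i - length u) v" "i - length u \<le> length v"
      using that by simp_all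
    then show ?thesis
      using u v by (simp add: motzkin_words_def)
  qed
  then show "u @ v \<in> motzkin_words"
    using u v by (simp add: motzkin_words_def)
qed

lemma motzkin_words_decomp:
  "motzkin_words = {[]} \<union> conc (Collect primitive \<inter> motzkin_words) motzkin_words"
proof (intro equalityI subsetI)
  fix w
  assume w: "w \<in> motzkin_words"
  then have "height w = 0"
    by (simp add: motzkin_words_def)
  then consider "w = []" | "primitive w" | "returns w \<noteq> {}"
    using primitive_def by blast
  then show "w \<in> {[]} \<union> conc (Collect primitive \<inter> motzkin_words) motzkin_words"
  proof cases
    case 1
    then show ?thesis
      by simp
  next
    case 2
    have "[] \<in> motzkin_words"
      by (simp add: motzkin_words_def)
    then have "w @ [] \<in> conc (Collect primitive \<inter> motzkin_words) motzkin_words"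
      using w 2 by (intro append_in_conc) simp_all
    then show ?thesis
      by simp
  next
    case 3
    obtain u v where uv: "w = u @ v" "primitive u"
      using \<open>height w = 0\<close> 3 by (rule primitive_prefixE)
    then have "u @ v \<in> conc (Collect primitive \<inter> motzkin_words) motzkin_words"
      using w append_in_motzkin_words_iff[of u v] by (intro append_in_conc) (simp_all add: primitive_def)
    then show ?thesis
      using uv(1) by simp
  qed
next
  fix w
  assume "w \<in> {[]} \<union> conc (Collect primitive \<inter> motzkin_words) motzkin_words"
  then consider "w = []"
    | u v where "w = u @ v" "primitive u" "u \<in> motzkin_words" "v \<in> motzkin_words"
    by (auto elim: concE)
  then show "w \<in> motzkin_words"
  proof cases
    case 1
    then show ?thesis
      by (simp add: motzkin_words_def)
  next
    case 2
    then show ?thesis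
      by (simp add: append_in_motzkin_words_iff primitive_def)
  qed
qed

section \<open>The generating function of excursions\<close>

lemma word_gf_level_words: "word_gf level_words = Yv + Zv"
proof -
  have "word_gf ({[(True, True)]} \<union> {[(False, False)]}) = Yv + Zv"
    by (subst word_gf_Un) (auto simp: word_gf_letter)
  then show ?thesis
    by (simp only: level_words_def insert_is_Un[symmetric])
qed

lemma level_words_excursions_disjoint: "level_words \<inter> excursions = {}"
  by (auto simp: level_words_def excursions_def)

lemma swapped_excursions_disjoint:
  "(level_words \<union> excursions) \<inter> map prod.swap ` excursions = {}"
  by (auto simp: level_words_def excursions_def)

lemma word_gf_primitive: "word_gf (Collect primitive) = Yv + Zv + 2 * word_gf excursions"
proof -
  have "word_gf (map prod.swap ` excursions) = word_gf excursions"
    by (rule word_gf_swap) (simp add: excursions_def primitive_def)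
  then have "word_gf (Collect primitive) = Yv + Zv + word_gf excursions + word_gf excursions"
    by (simp only: Collect_primitive_eq word_gf_Un[OF swapped_excursions_disjoint]
        word_gf_Un[OF level_words_excursions_disjoint] word_gf_level_words)
  then show ?thesis
    by (simp only: mult_2 add.assoc)
qed

lemma word_gf_excursions: "word_gf excursions = Yv * word_gf motzkin_words * Zv"
  by (simp add: excursions_eq_conc word_gf_conc inj_on_append_singleton_left
      inj_on_append_singleton_right word_gf_letter)

lemma word_gf_motzkin_words:
  "word_gf motzkin_words = 1 + (Yv + Zv + word_gf excursions) * word_gf motzkin_words"
proof -
  have "[] \<notin> conc (Collect primitive \<inter> motzkin_words) motzkin_words"
    by (auto elim!: concE simp: primitive_def)
  then have "word_gf motzkin_words =
      word_gf {[]} + word_gf (conc (Collect primitive \<inter> motzkin_words) motzkin_words)"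
    by (subst motzkin_words_decomp) (rule word_gf_Un, blast)
  also have "\<dots> = 1 + word_gf (Collect primitive \<inter> motzkin_words) * word_gf motzkin_words"
    by (simp add: word_gf_Nil word_gf_conc inj_on_append_primitive)
  also have "word_gf (Collect primitive \<inter> motzkin_words) = Yv + Zv + word_gf excursions"
    by (simp only: Collect_primitive_Int_motzkin_words word_gf_Un[OF level_words_excursions_disjoint]
        word_gf_level_words)
  finally show ?thesis .
qed

lemma quadratic_of_motzkin_equation:
  fixes y z f m :: "'a :: comm_ring_1"
  assumes f: "f = y * m * z" and m: "m = 1 + (y + z + f) * m"
  shows "f = (y + f) * (z + f)"
proof -
  have "f = y * z * (1 + (y + z + f) * m)"
    using f m by (metis mult.commute mult.left_commute)
  also have "\<dots> = y * z + (y + z + f) * f"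
    using f by (simp add: algebra_simps)
  finally show ?thesis
    by (simp add: algebra_simps)
qed

lemma completed_square:
  fixes y z f :: "'a :: comm_ring_1"
  assumes "f = (y + f) * (z + f)"
  shows "(1 - y - z - 2 * f)^2 = (1 - y - z)^2 - 4 * y * z"
proof -
  have "(1 - y - z - 2 * f)^2 - ((1 - y - z)^2 - 4 * y * z) = 4 * ((y + f) * (z + f) - f)"
    by (simp add: algebra_simps power2_eq_square)
  then show ?thesis
    using assms by simp
qed

lemma fsqrt2_eqI:
  assumes "H * H = G" "coeff2 H 0 0 = 1"
  shows "fsqrt2 G = H"
  unfolding fsqrt2_def
proof (rule the_equality)
  show "H * H = G \<and> coeff2 H 0 0 = 1"
    using assms by simp
next
  fix H'
  assume H': "H' * H' = G \<and> coeff2 H' 0 0 = 1"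
  have "(H' - H) * (H' + H) = 0"
    using assms H' by (simp add: algebra_simps)
  moreover have "H' + H \<noteq> 0"
  proof
    assume "H' + H = 0"
    then have "coeff2 (H' + H) 0 0 = 0"
      by (simp add: coeff2_def)
    then show False
      using assms H' by simp
  qed
  ultimately show "H' = H"
    by simp
qed

lemma f_series_eq_word_gf_excursions: "f_series = word_gf excursions"
proof -
  define E where "E = word_gf excursions"
  define H where "H = 1 - Yv - Zv - 2 * E"
  have "E = (Yv + E) * (Zv + E)"
    unfolding E_def using word_gf_excursions word_gf_motzkin_words
    by (rule quadratic_of_motzkin_equation)
  then have "H * H = (1 - Yv - Zv)^2 - 4 * Yv * Zv"
    unfolding H_def by (simp only: completed_square power2_eq_square[symmetric])
  moreover have "{w \<in> excursions. bideg w = (0, 0)} = {}"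
    using length_eq_bideg by (fastforce simp: excursions_def primitive_def)
  then have "coeff2 E 0 0 = 0"
    by (simp only: E_def coeff2_word_gf card.empty of_nat_0)
  then have "coeff2 H 0 0 = 1"
    by (simp add: H_def)
  ultimately have "f_series = fps_const (fps_const (1 / 2)) * ((1 - Yv - Zv) - H)"
    by (simp add: f_series_def fsqrt2_eqI)
  also have "\<dots> = E"
    by (simp add: H_def numeral_fps_const mult.assoc[symmetric] fps_const_mult[symmetric])
  finally show ?thesis
    by (simp add: E_def)
qed

section \<open>Pairs of lattice paths as words\<close>

definition vertex :: "bool list \<Rightarrow> nat \<Rightarrow> nat \<times> nat" where
  "vertex p i = (east (take i p), i - east (take i p))"

definition path_of :: "bool list \<Rightarrow> (nat \<times> nat) list" where
  "path_of p = map (vertex p) [0..<Suc (length p)]"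

lemma length_path_of [simp]: "length (path_of p) = Suc (length p)"
  by (simp add: path_of_def)

lemma nth_path_of: "i \<le> length p \<Longrightarrow> path_of p ! i = vertex p i"
  by (simp add: path_of_def nth_append del: upt_Suc)

lemma set_path_of: "set (path_of p) = vertex p ` {..length p}"
  by (simp add: path_of_def atLeast0LessThan lessThan_Suc_atMost del: upt_Suc)

lemma vertex_coordinate_sum: "fst (vertex p i) + snd (vertex p i) = i"
  using east_take_le[of i p] by (simp add: vertex_def)

lemma vertex_eq_iff: "vertex p i = vertex q j \<longleftrightarrow> i = j \<and> east (take i p) = east (take i q)"
  by (metis vertex_coordinate_sum vertex_def fst_conv)

lemma inj_vertex: "inj (vertex p)"
  by (rule injI) (simp add: vertex_eq_iff)

lemma vertex_Suc:
  "i < length p \<Longrightarrow> vertex p (Suc i) =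
    (if p ! i then (fst (vertex p i) + 1, snd (vertex p i)) else (fst (vertex p i), snd (vertex p i) + 1))"
  using east_take_le[of i p] by (simp add: vertex_def take_Suc_conv_app_nth Suc_diff_le)

lemma lattice_path_path_of: "lattice_path (length p) (east p) (path_of p)"
  by (auto simp: lattice_path_def nth_path_of vertex_Suc) (simp_all add: vertex_def)

lemma lattice_pathE:
  assumes "lattice_path n r P"
  obtains p where "length p = n" "east p = r" "P = path_of p"
proof
  define p where "p = map (\<lambda>i. fst (P ! Suc i) = Suc (fst (P ! i))) [0..<n]"
  have steps: "P ! Suc i = (fst (P ! i) + 1, snd (P ! i)) \<or> P ! Suc i = (fst (P ! i), snd (P ! i) + 1)"
    if "i < n" for i
    using assms that by (simp add: lattice_path_def)
  show len: "length p = n"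
    by (simp add: p_def)
  have vertex: "P ! i = vertex p i" if "i \<le> n" for i
    using that
  proof (induction i)
    case 0
    then show ?case
      using assms by (simp add: lattice_path_def vertex_def)
  next
    case (Suc i)
    then show ?case
      using steps[of i] len vertex_Suc[of i p] by (auto simp: p_def)
  qed
  show "P = path_of p"
    using assms len vertex by (intro nth_equalityI) (auto simp: lattice_path_def nth_path_of)
  show "east p = r"
    using assms vertex[of n] len by (simp add: lattice_path_def vertex_def)
qed

lemma inj_path_of: "inj path_of"
proof (rule injI)
  fix p q
  assume eq: "path_of p = path_of q"
  then have len: "length p = length q"
    using length_path_of by (metis Suc_inject)
  have "vertex p i = vertex q i" if "i \<le> length p" for i
    using eq that len by (metis nth_path_of)
  then have east_eq: "east (take i p) = east (take i q)" if "i \<le> length p" for i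
    using that by (simp add: vertex_eq_iff)
  show "p = q"
  proof (rule nth_equalityI)
    show "length p = length q"
      by (fact len)
    fix i
    assume "i < length p"
    then show "p ! i = q ! i"
      using east_eq[of i] east_eq[of "Suc i"] len east_take_Suc[of i p] east_take_Suc[of i q]
      by (simp add: of_bool_eq_iff)
  qed
qed

lemma height_take_eq_0_iff:
  "height (take i w) = 0 \<longleftrightarrow> east (take i (map fst w)) = east (take i (map snd w))"
  by (simp add: height_def take_map)

lemma vertex_image_Int:
  "vertex p ` A \<inter> vertex q ` A = vertex p ` {i \<in> A. east (take i p) = east (take i q)}"
  by (auto simp: vertex_eq_iff)

lemma common_vertices_path_of:
  fixes w :: "(bool \<times> bool) list"
  defines "p \<equiv> map fst w" and "q \<equiv> map snd w"
  shows "set (path_of p) \<inter> set (path_of q) - {(0, 0), bideg w} = vertex p ` returns w"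
proof -
  have "set (path_of p) \<inter> set (path_of q) =
      vertex p ` {i \<in> {..length w}. east (take i p) = east (take i q)}"
    unfolding set_path_of p_def q_def length_map by (rule vertex_image_Int)
  moreover have "{(0, 0), bideg w} = vertex p ` {0, length w}"
    by (simp add: vertex_def bideg_def p_def)
  moreover have "{i \<in> {..length w}. east (take i p) = east (take i q)} - {0, length w} = returns w"
    by (auto simp: returns_def height_take_eq_0_iff p_def q_def)
  ultimately show ?thesis
    by (simp only: image_set_diff[OF inj_vertex, symmetric])
qed

lemma card_common_vertices_path_of:
  "card (set (path_of (map fst w)) \<inter> set (path_of (map snd w)) - {(0, 0), bideg w}) =
    card (returns w)"
  by (simp add: common_vertices_path_of card_image inj_on_subset[OF inj_vertex])

definition path_pair :: "(bool \<times> bool) list \<Rightarrow> (nat \<times> nat) list \<times> (nat \<times> nat) list" where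
  "path_pair w = (path_of (map fst w), path_of (map snd w))"

lemma inj_path_pair: "inj path_pair"
  unfolding path_pair_def by (rule injI) (metis inj_path_of injD prod.inject zip_map_fst_snd)

lemma lattice_path_pairs_eq:
  assumes "r \<le> n"
  shows "{(P, Q). lattice_path n r P \<and> lattice_path n r Q} =
    path_pair ` {w. height w = 0 \<and> bideg w = (r, n - r)}"
proof -
  have bideg_iff: "bideg w = (r, n - r) \<longleftrightarrow> length w = n \<and> east (map fst w) = r" for w
    using assms length_eq_bideg[of w] by (auto simp: bideg_def)
  have height_iff: "height w = 0 \<longleftrightarrow> east (map snd w) = east (map fst w)" for w
    by (auto simp: height_def)
  show ?thesis
  proof (intro equalityI subsetI)
    fix x
    assume "x \<in> {(P, Q). lattice_path n r P \<and> lattice_path n r Q}"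
    then obtain P Q where x: "x = (P, Q)" "lattice_path n r P" "lattice_path n r Q"
      by blast
    obtain p where p: "length p = n" "east p = r" "P = path_of p"
      using x(2) by (rule lattice_pathE)
    obtain q where q: "length q = n" "east q = r" "Q = path_of q"
      using x(3) by (rule lattice_pathE)
    have w: "map fst (zip p q) = p" "map snd (zip p q) = q" "length (zip p q) = n"
      using p(1) q(1) by simp_all
    then have "height (zip p q) = 0 \<and> bideg (zip p q) = (r, n - r)"
      using p(2) q(2) bideg_iff height_iff by simp
    moreover have "x = path_pair (zip p q)"
      using x(1) p(3) q(3) w by (simp add: path_pair_def)
    ultimately show "x \<in> path_pair ` {w. height w = 0 \<and> bideg w = (r, n - r)}"
      by blast
  next
    fix x
    assume "x \<in> path_pair ` {w. height w = 0 \<and> bideg w = (r, n - r)}"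
    then obtain w where "x = path_pair w" "height w = 0" "bideg w = (r, n - r)"
      by blast
    moreover have "lattice_path n r (path_of p)" if "length p = n" "east p = r" for p
      using lattice_path_path_of[of p] that by simp
    ultimately show "x \<in> {(P, Q). lattice_path n r P \<and> lattice_path n r Q}"
      using bideg_iff height_iff by (simp add: path_pair_def)
  qed
qed

lemma N_count_eq_card_words_with_returns:
  assumes "1 \<le> n" "r \<le> n"
  shows "N_count k n r = card {w \<in> words_with_returns k. bideg w = (r, n - r)}"
proof -
  let ?common = "\<lambda>(P, Q). set P \<inter> set Q - {(0, 0), (r, n - r)}"
  have "w \<noteq> []" if "bideg w = (r, n - r)" for w
    using assms length_eq_bideg[of w] that by auto
  moreover have "card (?common (path_pair w)) = card (returns w)" if "bideg w = (r, n - r)" for w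
    using card_common_vertices_path_of[of w] that by (simp add: path_pair_def)
  ultimately have words:
    "{w. height w = 0 \<and> bideg w = (r, n - r) \<and> card (?common (path_pair w)) = k} =
      {w \<in> words_with_returns k. bideg w = (r, n - r)}"
    by (auto simp: words_with_returns_def)
  have "{(P, Q). lattice_path n r P \<and> lattice_path n r Q \<and>
      card (set P \<inter> set Q - {(0, 0), (r, n - r)}) = k} =
    {x \<in> {(P, Q). lattice_path n r P \<and> lattice_path n r Q}. card (?common x) = k}"
    by auto
  also have "\<dots> = path_pair ` {w \<in> words_with_returns k. bideg w = (r, n - r)}"
    unfolding lattice_path_pairs_eq[OF assms(2)] words[symmetric] by blast
  finally show ?thesis
    unfolding N_count_def by (simp add: card_image inj_on_subset[OF inj_path_pair])
qed

theorem mainTheorem3: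
  fixes n r k :: nat
  assumes "1 \<le> n" and "r \<le> n"
  shows "of_nat (N_count k n r) = coeff2 ((Yv + Zv + 2 * f_series) ^ (k + 1)) r (n - r)"
proof -
  have "(Yv + Zv + 2 * f_series) ^ (k + 1) = word_gf (words_with_returns k)"
    by (simp add: f_series_eq_word_gf_excursions word_gf_primitive word_gf_words_with_returns)
  then show ?thesis
    by (simp add: coeff2_word_gf N_count_eq_card_words_with_returns[OF assms])
qed

end
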